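(* Let $r>1$, $0<a<r$ coprime, $\theta\in\Theta$ and $j\in\{0,\dots,r-1\}$. The representation $\mathcal F_j$ is $\theta$-stable (resp. $\theta$-semistable) if and only if $\theta(V_{i,j})>0$ (resp. $\ge0$) for every vertex $i$ for which $V_{i,j}$ is a non-empty proper subset of the vertices forming a subrepresentation of $\mathcal F_j$, and $\theta(W_{i,j})>0$ (resp. $\ge0$) for every vertex $i$ for which $W_{i,j}$ is a non-empty proper subset of the vertices forming a subrepresentation of $\mathcal F_j$.
   Context: Notation: for integers $s$ and $t>0$, $\langle s\rangle_t$ is the least non-negative integer congruent to $s$ modulo $t$. A pair of integers $(r,a)$ is admissible if $r\ge1$, $0\le a<r$, $\gcd(r,a)=1$ (so $a=0$ only for $r=1$). For admissible $(r,a)$ put $N(r,a)=\mathbb Z^3+\mathbb Z\cdot\frac1r(1,a,r-a)\subset\mathbb Q^3$; $e_1,e_2,e_3$ is the standard basis and $\Delta(r,a)$ the cone spanned by $e_1,e_2,e_3$. Let $b$ be an inverse of $a$ modulo $r$ and $p_i=\frac1r(\langle -ib\rangle_r,r-i,i)$, $i=0,\dots,r$ (so $p_0=e_2$, $p_r=e_3$, $p_{r-a}=\frac1r(1,a,r-a)$). For $r>1$ let $(r_L,a_L)=(r-a,\langle r\rangle_{r-a})$, $(r_R,a_R)=(a,\langle -r\rangle_a)$; there are lattice isomorphisms $L:N(r_L,a_L)\to N(r,a)$, $R:N(r_R,a_R)\to N(r,a)$ with $L(e_1)=e_1$, $L(e_2)=e_2$, $L(e_3)=p_{r-a}$, $R(e_1)=e_1$,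 $R(e_2)=p_{r-a}$, $R(e_3)=e_3$. The Danilov fan $\Sigma(r,a)$ is defined recursively: $\Sigma(1,0)$ is $\Delta(1,0)$ with its faces; for $r>1$, $\Sigma(r,a)$ consists of the cone spanned by $e_2,e_3,p_{r-a}$ with its faces, together with $L(\Sigma(r_L,a_L))$ and $R(\Sigma(r_R,a_R))$. The Danilov resolution $Y$ is the smooth toric variety of $\Sigma(r,a)$, with torus $T$; its rays are spanned by $e_1,p_0,\dots,p_r$; $D_i$ is the $T$-invariant prime divisor of the ray through $p_i$ and $E_j$ that of $e_j$. For a $3$-dimensional cone $\sigma$, $U_\sigma\cong\mathbb C^3$ is its affine chart; for $j=0,\dots,r-1$, $\sigma_j$ is the cone spanned by $p_j,p_{j+1},e_1$ (a cone of $\Sigma(r,a)$). The permutation $\tau(r,a,\cdot)$ of $\{0,\dots,r-1\}$: if $a\in\{1,r-1\}$, $\tau(r,a,i)=\langle ai-1\rangle_r$; otherwise $\tau(r,a,i)=\tau(r-a,\langle r\rangle_{r-a},\langle i\rangle_{r-a})$ for $i\ge a$ and $\tau(r,a,i)=(r-a)+\tau(a,\langle -r\rangle_a,i)$ for $i<a$; $\xi(r,a,\cdot)$ is its inverse. With indices mod $r$, on $Y$ define $Y_{i-a}=\sum_{k=0}^{\tau(r,a,i)}D_k$, $Z_i=\sum_{k=\tau(r,a,i)+1}^{r}D_k$ ($i=0,\dots,r-1$), and $X_0,\dots,X_{r-1}$ the unique divisors with $X_0=E_1$ and $X_i+Z_{i+1}=Z_i+X_{i-a}$; these satisfy $X_i+Y_{i+1}=Y_i+X_{i+a}$,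 $X_i+Z_{i+1}=Z_i+X_{i-a}$, $Y_i+Z_{i+a}=Z_i+Y_{i-a}$. The McKay quiver has vertices $0,\dots,r-1$ (mod $r$) and arrows $x_i:i\to i+1$, $y_i:i\to i+a$, $z_i:i\to i-a$; a representation assigns a complex number $V(\alpha)$ to each arrow with $V(y_{i+1})V(x_i)=V(x_{i+a})V(y_i)$, $V(z_{i+1})V(x_i)=V(x_{i-a})V(z_i)$, $V(y_{i-a})V(z_i)=V(z_{i+a})V(y_i)$. Subrepresentations of $V$ correspond to subsets $S$ of vertices such that whenever an arrow $\alpha$ has tail in $S$ and $V(\alpha)\ne0$, its head is in $S$. $\Theta=\{\theta\in\mathbb Q^r:\sum_i\theta_i=0\}$, $\theta(S)=\sum_{i\in S}\theta_i$; $V$ is $\theta$-stable (resp. semistable) if $\theta(S)>0$ (resp. $\ge0$) for all non-empty proper such $S$. The family $\mathcal F$ on $Y$ consists of the line bundles $\mathcal O(X_i),\mathcal O(Y_i),\mathcal O(Z_i)$ with their canonical sections; concretely, for $s\in U_\sigma$, each effective $T$-invariant divisor $D$ restricts on $U_\sigma$ to the divisor of a unique monomial $f_{\sigma,D}$ in the toric coordinates of $U_\sigma$, and $\mathcal F_s$ is the representation with $x_i,y_i,z_i$ represented by $f_{\sigma,X_i}(s),f_{\sigma,Y_i}(s),f_{\sigma,Z_i}(s)$. $\mathcal F_j$ denotes $\mathcal F_s$ for $s$ the $T$-fixed point of $U_{\sigma_j}$. For a vertex $i$ and $j\in\{0,\dots,r-1\}$: $V_{i,j}$ is the set of vertices $i,\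 i+(r-a),\ i+2(r-a),\dots$ (mod $r$) up to and including the first occurrence of $\xi(r,a,j)$; $W_{i,j}$ is the set of vertices $\xi(r,a,j)+(r-a),\ \xi(r,a,j)+2(r-a),\dots$ (mod $r$) up to and including the first occurrence of $i$. *)

theory Defs
  imports Complex_Main "HOL-Library.Function_Algebras"
begin

function tau :: "nat \<Rightarrow> nat \<Rightarrow> nat \<Rightarrow> nat" where
  "tau r a i =
    (if r \<le> 1 \<or> a = 0 \<or> r \<le> a then 0
     else if a = 1 \<or> a = r - 1 then (a * i + r - 1) mod r
     else if a \<le> i then tau (r - a) (r mod (r - a)) (i mod (r - a))
     else (r - a) + tau a ((a - r mod a) mod a) i)"
  by pat_completeness auto
termination
  by (relation "measure (\<lambda>(r, a, i). r)") auto

definition xi :: "nat \<Rightarrow> nat \<Rightarrow> nat \<Rightarrow> nat" where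
  "xi r a j = (THE i. i < r \<and> tau r a i = j)"

text \<open>The rays of Sigma(r,a) are spanned by e_1, p_0, ..., p_r.  We index the
  T-invariant prime divisors by \<open>nat option\<close>: \<open>None\<close> is E_1 (ray e_1),
  \<open>Some k\<close> is D_k (ray p_k).\<close>

type_synonym divisor = "nat option \<Rightarrow> int"

definition primD :: "nat option \<Rightarrow> divisor" where
  "primD \<rho> = (\<lambda>\<rho>'. if \<rho>' = \<rho> then 1 else 0)"

definition E1 :: divisor where "E1 = primD None"

definition Ddiv :: "nat \<Rightarrow> divisor" where "Ddiv k = primD (Some k)"

definition Ydiv :: "nat \<Rightarrow> nat \<Rightarrow> nat \<Rightarrow> divisor" where
  \<comment> \<open>Y_{i-a} = sum_{k=0}^{tau(i)} D_k, i.e. Y_m = sum_{k=0}^{tau(m+a)} D_k\<close>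
  "Ydiv r a m = (\<Sum>k\<in>{0..tau r a ((m + a) mod r)}. Ddiv k)"

definition Zdiv :: "nat \<Rightarrow> nat \<Rightarrow> nat \<Rightarrow> divisor" where
  "Zdiv r a i = (\<Sum>k\<in>{tau r a (i mod r) + 1..r}. Ddiv k)"

definition Xdiv :: "nat \<Rightarrow> nat \<Rightarrow> nat \<Rightarrow> divisor" where
  "Xdiv r a = (THE X. X 0 = E1 \<and> (\<forall>i\<ge>r. X i = 0) \<and>
      (\<forall>i<r. X i + Zdiv r a ((i + 1) mod r) = Zdiv r a i + X ((i + r - a) mod r)))"

text \<open>The cone sigma_j is spanned by p_j, p_{j+1}, e_1; its chart U_{sigma_j} is C^3
  with coordinates u_0, u_1, u_2, where u_k vanishes exactly along the prime divisor
  of the k-th ray.  An effective T-invariant divisor D restricts on U_sigma to the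
  divisor of the monomial prod_k u_k^(coefficient of D on the k-th ray).\<close>

definition sigma_ray :: "nat \<Rightarrow> nat \<Rightarrow> nat option" where
  "sigma_ray j k = (if k = 0 then Some j else if k = 1 then Some (j + 1) else None)"

definition monomial_val :: "nat \<Rightarrow> divisor \<Rightarrow> (nat \<Rightarrow> complex) \<Rightarrow> complex" where
  "monomial_val j D s = (\<Prod>k<3. s k ^ nat (D (sigma_ray j k)))"

definition fixed_point :: "nat \<Rightarrow> complex" where
  "fixed_point = (\<lambda>_. 0)"

datatype arrow = ArrX nat | ArrY nat | ArrZ nat

definition arr_tail :: "nat \<Rightarrow> nat \<Rightarrow> arrow \<Rightarrow> nat" where
  "arr_tail r a \<alpha> = (case \<alpha> of ArrX i \<Rightarrow> i | ArrY i \<Rightarrow> i | ArrZ i \<Rightarrow> i)"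

definition arr_head :: "nat \<Rightarrow> nat \<Rightarrow> arrow \<Rightarrow> nat" where
  "arr_head r a \<alpha> = (case \<alpha> of ArrX i \<Rightarrow> (i + 1) mod r
                               | ArrY i \<Rightarrow> (i + a) mod r
                               | ArrZ i \<Rightarrow> (i + r - a) mod r)"

definition arrows :: "nat \<Rightarrow> arrow set" where
  "arrows r = {ArrX i | i. i < r} \<union> {ArrY i | i. i < r} \<union> {ArrZ i | i. i < r}"

definition is_subrep :: "nat \<Rightarrow> nat \<Rightarrow> (arrow \<Rightarrow> complex) \<Rightarrow> nat set \<Rightarrow> bool" where
  "is_subrep r a V S \<longleftrightarrow> S \<subseteq> {0..<r} \<and>
     (\<forall>\<alpha>\<in>arrows r. arr_tail r a \<alpha> \<in> S \<and> V \<alpha> \<noteq> 0 \<longrightarrow> arr_head r a \<alpha> \<in> S)"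

definition Theta :: "nat \<Rightarrow> (nat \<Rightarrow> rat) set" where
  "Theta r = {\<theta>. (\<Sum>i<r. \<theta> i) = 0}"

definition theta_of :: "(nat \<Rightarrow> rat) \<Rightarrow> nat set \<Rightarrow> rat" where
  "theta_of \<theta> S = (\<Sum>i\<in>S. \<theta> i)"

definition stable :: "nat \<Rightarrow> nat \<Rightarrow> (nat \<Rightarrow> rat) \<Rightarrow> (arrow \<Rightarrow> complex) \<Rightarrow> bool" where
  "stable r a \<theta> V \<longleftrightarrow> (\<forall>S. is_subrep r a V S \<and> S \<noteq> {} \<and> S \<noteq> {0..<r} \<longrightarrow> theta_of \<theta> S > 0)"

definition semistable :: "nat \<Rightarrow> nat \<Rightarrow> (nat \<Rightarrow> rat) \<Rightarrow> (arrow \<Rightarrow> complex) \<Rightarrow> bool" where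
  "semistable r a \<theta> V \<longleftrightarrow> (\<forall>S. is_subrep r a V S \<and> S \<noteq> {} \<and> S \<noteq> {0..<r} \<longrightarrow> theta_of \<theta> S \<ge> 0)"

definition Frep :: "nat \<Rightarrow> nat \<Rightarrow> nat \<Rightarrow> (nat \<Rightarrow> complex) \<Rightarrow> arrow \<Rightarrow> complex" where
  "Frep r a j s \<alpha> = (case \<alpha> of
       ArrX i \<Rightarrow> monomial_val j (Xdiv r a i) s
     | ArrY i \<Rightarrow> monomial_val j (Ydiv r a i) s
     | ArrZ i \<Rightarrow> monomial_val j (Zdiv r a i) s)"

definition Fj :: "nat \<Rightarrow> nat \<Rightarrow> nat \<Rightarrow> arrow \<Rightarrow> complex" where
  "Fj r a j = Frep r a j fixed_point"

definition Vset :: "nat \<Rightarrow> nat \<Rightarrow> nat \<Rightarrow> nat \<Rightarrow> nat set" where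
  "Vset r a i j =
    (let n = (LEAST n. (i + n * (r - a)) mod r = xi r a j)
     in {(i + k * (r - a)) mod r | k. k \<le> n})"

definition Wset :: "nat \<Rightarrow> nat \<Rightarrow> nat \<Rightarrow> nat \<Rightarrow> nat set" where
  "Wset r a i j =
    (let m = (LEAST m. 1 \<le> m \<and> (xi r a j + m * (r - a)) mod r = i)
     in {(xi r a j + k * (r - a)) mod r | k. 1 \<le> k \<and> k \<le> m})"

end

theory Submission
  imports Defs "HOL-Number_Theory.Cong"
begin

text \<open>
  At the torus-fixed point of the chart of \<open>\<sigma>\<^sub>j\<close> every \<open>x\<close>-arrow of \<open>F\<^sub>j\<close> vanishes (each
  \<open>X\<^sub>i\<close> contains \<open>E\<^sub>1\<close>), \<open>y\<^sub>m\<close> survives iff \<open>\<tau>(m + a) < j\<close>, and \<open>z\<^sub>i\<close> survives iff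
  \<open>j < \<tau>(i)\<close>.  List the vertices along the cycle \<open>c q = \<xi>(j) + (q + 1)(r - a)\<close>, which
  ends with \<open>c (r - 1) = \<xi>(j)\<close>, the only vertex where \<open>\<tau> = j\<close>.  The surviving arrows then
  join consecutive vertices only: \<open>c q \<rightarrow> c (q + 1)\<close> by \<open>z\<close> if \<open>\<tau>(c q) > j\<close>, and
  \<open>c (q + 1) \<rightarrow> c q\<close> by \<open>y\<close> if \<open>\<tau>(c q) < j\<close>.  So wherever the chain leaves a
  subrepresentation \<open>S\<close>, the initial segment \<open>W\<close> up to that point is a subrepresentation, and
  wherever it enters \<open>S\<close>, so is the final segment \<open>V\<close> from that point on.  Abel summation
  along the chain writes \<open>\<theta>(S)\<close> as the sum of \<open>\<theta>\<close> over these segments, so it suffices to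
  test the sets \<open>V\<^sub>i\<^sub>,\<^sub>j\<close> and \<open>W\<^sub>i\<^sub>,\<^sub>j\<close>.
\<close>



section \<open>Arithmetic progressions modulo r\<close>

lemma progression_mod_inj:
  fixes b s r :: nat
  assumes "coprime s r" "k < r" "k' < r" "(b + k * s) mod r = (b + k' * s) mod r"
  shows "k = k'"
proof -
  have "[b + k * s = b + k' * s] (mod r)" using assms(4) by (simp add: cong_def)
  then have "[k * s = k' * s] (mod r)" by (simp add: cong_add_lcancel_nat)
  then have "[k = k'] (mod r)" using assms(1) by (simp add: cong_mult_rcancel_nat)
  then show ?thesis using assms(2,3) cong_less_imp_eq_nat by blast
qed

lemma progression_mod_bij:
  fixes b s r :: nat
  assumes "coprime s r" "0 < r"
  shows "bij_betw (\<lambda>k. (b + k * s) mod r) {..<r} {..<r}"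
proof -
  have inj: "inj_on (\<lambda>k. (b + k * s) mod r) {..<r}"
  proof (rule inj_onI)
    fix k k' assume "k \<in> {..<r}" "k' \<in> {..<r}" "(b + k * s) mod r = (b + k' * s) mod r"
    then show "k = k'" using progression_mod_inj[OF assms(1)] by blast
  qed
  moreover have "(\<lambda>k. (b + k * s) mod r) ` {..<r} \<subseteq> {..<r}" using assms(2) by auto
  ultimately show ?thesis using endo_inj_surj[OF _ _ inj] by (simp add: bij_betw_def)
qed

lemma shift_invariant_imp_const:
  fixes s r i :: nat
  assumes "coprime s r" "0 < r" "\<And>i. i < r \<Longrightarrow> f ((i + s) mod r) = f i" "i < r"
  shows "f i = f 0"
proof -
  have along: "f ((k * s) mod r) = f 0" for k
  proof (induction k)
    case (Suc k)
    have "(Suc k * s) mod r = ((k * s) mod r + s) mod r" by (simp add: mod_simps add.commute)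
    then show ?case using assms(2) assms(3)[of "(k * s) mod r"] Suc by simp
  qed simp
  have "i \<in> (\<lambda>k. (0 + k * s) mod r) ` {..<r}"
    using progression_mod_bij[OF assms(1,2), of 0] assms(4) by (simp add: bij_betw_def)
  then show ?thesis using along by auto
qed

lemma cyclic_difference_equation_solvable:
  fixes s r :: nat and h :: "nat \<Rightarrow> 'a::ab_group_add"
  assumes "coprime s r" "0 < r" "(\<Sum>i<r. h i) = 0"
  shows "\<exists>f. f 0 = c \<and> (\<forall>i<r. f ((i + s) mod r) = f i + h i)"
proof -
  define p where "p k = (k * s) mod r" for k
  define n where "n = inv_into {..<r} p"
  have p: "bij_betw p {..<r} {..<r}"
    unfolding p_def using progression_mod_bij[OF assms(1,2), of 0] by simp
  have n: "n i < r" "p (n i) = i" if "i < r" for i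
    using bij_betwE[OF bij_betw_inv_into[OF p]] bij_betw_inv_into_right[OF p] that
    unfolding n_def by auto
  have n_p: "n (p k) = k" if "k < r" for k
    using bij_betw_inv_into_left[OF p] that unfolding n_def by simp
  define f where "f i = c + (\<Sum>t<n i. h (p t))" for i
  have "f ((i + s) mod r) = f i + h i" if i: "i < r" for i
  proof -
    have p_Suc: "p (Suc (n i)) = (i + s) mod r"
      using n[OF i] unfolding p_def by (metis mod_add_left_eq mult_Suc add.commute)
    show ?thesis
    proof (cases "Suc (n i) < r")
      case True
      then have "n ((i + s) mod r) = Suc (n i)" using n_p p_Suc by metis
      then show ?thesis using n[OF i] by (simp add: f_def)
    next
      case False
      then have last: "Suc (n i) = r" using n[OF i] by simp
      have "(i + s) mod r = 0" using p_Suc by (simp add: last p_def)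
      moreover have "n 0 = 0" using n_p[of 0] assms(2) by (simp add: p_def)
      moreover have "f i + h i = c + (\<Sum>t<Suc (n i). h (p t))"
        using n[OF i] by (simp add: f_def add.assoc)
      moreover have "(\<Sum>t<r. h (p t)) = 0"
        using sum.reindex_bij_betw[OF p, of h] assms(3) by simp
      ultimately show ?thesis by (simp add: f_def last)
    qed
  qed
  moreover have "f 0 = c" using n_p[of 0] assms(2) by (simp add: f_def p_def)
  ultimately show ?thesis by blast
qed

lemma mod_inj_on_interval: "inj_on (\<lambda>i. i mod s) {a..<a + (s::nat)}"
proof -
  have le: "x = y" if "a \<le> x" "x \<le> y" "y < a + s" "x mod s = y mod s" for x y
  proof -
    have "s dvd y - x" using mod_eq_dvd_iff_nat[of x y s] that by simp
    moreover have "y - x < s" using that by linarith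
    ultimately show "x = y" using that(2) nat_dvd_not_less[of "y - x" s] by linarith
  qed
  show ?thesis
  proof (rule inj_onI)
    fix x y assume "x \<in> {a..<a + s}" "y \<in> {a..<a + s}" "x mod s = y mod s"
    then show "x = y" using le[of x y] le[of y x] by (cases "x \<le> y") auto
  qed
qed

lemma bij_betw_interval_split:
  fixes f g :: "nat \<Rightarrow> nat"
  assumes f: "bij_betw f {..<s} {..<s}" and g: "bij_betw g {..<a} {..<a}"
  shows "bij_betw (\<lambda>i. if a \<le> i then f (i mod s) else s + g i) {..<a + s} {..<a + s}"
proof -
  let ?h = "\<lambda>i. if a \<le> i then f (i mod s) else s + g i"
  have f_lt: "f (i mod s) < s" if "a \<le> i" "i < a + s" for i
    using f that by (auto simp: bij_betw_def)
  have g_lt: "g i < a" if "i < a" for i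
    using g that by (auto simp: bij_betw_def)
  have "inj_on ?h {..<a + s}"
  proof (rule inj_onI)
    fix x y assume x: "x \<in> {..<a + s}" and y: "y \<in> {..<a + s}" and eq: "?h x = ?h y"
    consider "a \<le> x" "a \<le> y" | "x < a" "y < a" | "a \<le> x" "y < a" | "x < a" "a \<le> y"
      by linarith
    then show "x = y"
    proof cases
      case 1
      with x y have "x mod s < s" "y mod s < s" by auto
      with eq 1 f have "x mod s = y mod s" by (auto simp: bij_betw_def inj_on_def)
      with 1 x y show ?thesis using mod_inj_on_interval[of s a] by (auto simp: inj_on_def)
    next
      case 2
      with eq g show ?thesis by (auto simp: bij_betw_def inj_on_def)
    next
      case 3
      then have "f (x mod s) < s" using f_lt x by simp
      with eq 3 show ?thesis by simp
    next
      case 4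
      then have "f (y mod s) < s" using f_lt y by simp
      with eq 4 show ?thesis by simp
    qed
  qed
  moreover have "?h ` {..<a + s} \<subseteq> {..<a + s}"
    using f_lt g_lt by fastforce
  ultimately show ?thesis using endo_inj_surj[of "{..<a + s}" ?h] by (simp add: bij_betw_def)
qed

lemma coprime_diff_left_iff_nat: "a \<le> r \<Longrightarrow> coprime (r - a) r \<longleftrightarrow> coprime a (r::nat)"
  by (simp add: coprime_iff_gcd_eq_1 gcd_diff2_nat)

lemma sum_fun_apply: "finite A \<Longrightarrow> (\<Sum>k\<in>A. f k) x = (\<Sum>k\<in>A. f k x)"
  by (induction A rule: finite_induct) auto

lemma sum_by_parts:
  fixes t e :: "nat \<Rightarrow> 'a::comm_ring"
  shows "(\<Sum>q\<le>n. t q * e q) = (\<Sum>q<n. (\<Sum>k\<le>q. t k) * (e q - e (Suc q))) + (\<Sum>k\<le>n. t k) * e n"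
proof (induction n)
  case (Suc n)
  let ?P = "\<lambda>q. \<Sum>k\<le>q. t k"
  have "(\<Sum>q\<le>Suc n. t q * e q)
      = (\<Sum>q<n. ?P q * (e q - e (Suc q))) + ?P n * e n + t (Suc n) * e (Suc n)"
    using Suc by simp
  also have "\<dots> = (\<Sum>q<Suc n. ?P q * (e q - e (Suc q))) + ?P (Suc n) * e (Suc n)"
    by (simp add: ring_distribs)
  finally show ?case .
qed simp

lemma ex_adjacent_change:
  assumes "q0 < n" "q1 < n" "P q0 \<noteq> P q1"
  shows "\<exists>q. Suc q < n \<and> P q \<noteq> P (Suc q)"
proof (rule ccontr)
  assume "\<not> ?thesis"
  then have "q < n \<Longrightarrow> P q = P 0" for q by (induction q) auto
  then show False using assms by metis
qed

section \<open>The permutation tau\<close>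

declare tau.simps [simp del]

lemma tau_linear:
  assumes "0 < a" "a < r" "a = 1 \<or> a = r - 1"
  shows "tau r a i = (r - 1 + i * a) mod r"
  using assms by (subst tau.simps) (auto simp: ac_simps)

lemma tau_recursive:
  assumes "1 < a" "a + 1 < r"
  shows "tau r a i = (if a \<le> i then tau (r - a) (r mod (r - a)) (i mod (r - a))
                      else (r - a) + tau a ((a - r mod a) mod a) i)"
  using assms by (subst tau.simps) auto

lemma tau_recursion_coprime:
  fixes r a :: nat
  assumes "coprime r a" "1 < a" "a < r"
  shows "coprime (r - a) (r mod (r - a))" and "coprime a ((a - r mod a) mod a)"
proof -
  have "coprime (r - a) r"
    using coprime_diff_left_iff_nat[of a r] assms by (simp add: coprime_commute)
  then show "coprime (r - a) (r mod (r - a))" using assms(3) by simp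
  have r_mod_a: "r mod a \<noteq> 0"
  proof
    assume "r mod a = 0"
    then have "a = 1" using coprime_common_divisor_nat[OF assms(1)] by auto
    with assms(2) show False by simp
  qed
  have "coprime (a - r mod a) a"
    using coprime_diff_left_iff_nat[of "r mod a" a] assms by (simp add: coprime_commute less_imp_le)
  then show "coprime a ((a - r mod a) mod a)"
    using r_mod_a assms(2) by (simp add: coprime_commute)
qed

lemma tau_bij:
  assumes "0 < r" "a < r" "coprime r a"
  shows "bij_betw (tau r a) {..<r} {..<r}"
  using assms
proof (induction r arbitrary: a rule: less_induct)
  case (less r)
  have "a \<noteq> 0 \<or> r = 1" using less.prems(3) by (cases a) auto
  then consider "r = 1" | "1 < r" "a = 1 \<or> a = r - 1" | "1 < a" "a + 1 < r"
    using less.prems(1,2) by (cases "r = 1"; cases "a = 1 \<or> a = r - 1") auto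
  then show ?case
  proof cases
    case 1
    then show ?thesis by (simp add: bij_betw_def lessThan_Suc tau.simps)
  next
    case 2
    then have "0 < a" using less.prems by (auto intro!: Nat.gr0I)
    then have "tau r a = (\<lambda>i. (r - 1 + i * a) mod r)"
      using tau_linear 2 less.prems by auto
    then show ?thesis
      by (simp only:) (rule progression_mod_bij, use less.prems in \<open>auto simp: coprime_commute\<close>)
  next
    case 3
    define s where "s = r - a"
    have r: "r = a + s" using 3 s_def by simp
    have s: "1 < s" using 3 s_def by simp
    have IH_s: "bij_betw (tau s (r mod s)) {..<s} {..<s}"
      using less.IH[of s "r mod s"] tau_recursion_coprime(1)[OF less.prems(3)] 3 s by (auto simp: s_def)
    have IH_a: "bij_betw (tau a ((a - r mod a) mod a)) {..<a} {..<a}"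
      using less.IH[of a "(a - r mod a) mod a"] tau_recursion_coprime(2)[OF less.prems(3)] 3
      by (auto simp: mod_less_divisor)
    have "tau r a = (\<lambda>i. if a \<le> i then tau s (r mod s) (i mod s)
                          else s + tau a ((a - r mod a) mod a) i)"
      using tau_recursive[OF 3] s_def by auto
    then show ?thesis
      using bij_betw_interval_split[OF IH_s IH_a] r by simp
  qed
qed

section \<open>The divisors and the representation at a fixed point\<close>

lemma sum_Ddiv_Some: "finite A \<Longrightarrow> (\<Sum>k\<in>A. Ddiv k) (Some m) = of_bool (m \<in> A)"
  by (simp add: sum_fun_apply Ddiv_def primD_def)

lemma sum_Ddiv_None: "finite A \<Longrightarrow> (\<Sum>k\<in>A. Ddiv k) None = 0"
  by (simp add: sum_fun_apply Ddiv_def primD_def)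

lemma Xdiv_spec:
  assumes "coprime r a" "0 < a" "a < r"
  shows "Xdiv r a 0 = E1"
    and "\<And>i. i < r \<Longrightarrow>
           Xdiv r a ((i + (r - a)) mod r) = Xdiv r a i + (Zdiv r a ((i + 1) mod r) - Zdiv r a i)"
proof -
  define s where "s = r - a"
  define h where "h i = Zdiv r a ((i + 1) mod r) - Zdiv r a i" for i
  define P where "P X \<longleftrightarrow> X 0 = E1 \<and> (\<forall>i\<ge>r. X i = 0) \<and>
      (\<forall>i<r. X i + Zdiv r a ((i + 1) mod r) = Zdiv r a i + X ((i + r - a) mod r))"
    for X :: "nat \<Rightarrow> divisor"
  have r: "0 < r" and s: "coprime s r"
    using assms coprime_diff_left_iff_nat[of a r] by (auto simp: s_def coprime_commute)
  have shift: "i + r - a = i + s" for i using assms(3) by (simp add: s_def)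
  have P_iff: "P X \<longleftrightarrow> X 0 = E1 \<and> (\<forall>i\<ge>r. X i = 0) \<and> (\<forall>i<r. X ((i + s) mod r) = X i + h i)"
    for X unfolding P_def shift h_def by (auto simp: algebra_simps)
  have "(\<Sum>i<r. Zdiv r a ((1 + i * 1) mod r)) = (\<Sum>i<r. Zdiv r a i)"
    using sum.reindex_bij_betw[OF progression_mod_bij[OF _ r, of 1 1]] by simp
  then have "(\<Sum>i<r. h i) = 0" by (simp add: h_def sum_subtractf add.commute)
  then obtain f where f: "f 0 = E1" "\<forall>i<r. f ((i + s) mod r) = f i + h i"
    using cyclic_difference_equation_solvable[OF s r] by blast
  have "P (\<lambda>i. if i < r then f i else 0)"
    unfolding P_iff using f r by simp
  moreover have "X = X'" if X: "P X" and X': "P X'" for X X'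
  proof
    fix i
    have "X i - X' i = X 0 - X' 0" if "i < r"
      using shift_invariant_imp_const[OF s r _ that, where f = "\<lambda>i. X i - X' i"] X X'
      unfolding P_iff by simp
    then show "X i = X' i" using X X' unfolding P_iff by (cases "i < r") auto
  qed
  ultimately have "\<exists>!X. P X" by blast
  then have "P (THE X. P X)" by (rule theI')
  then have "P (Xdiv r a)" unfolding Xdiv_def P_def .
  then show "Xdiv r a 0 = E1"
    and "\<And>i. i < r \<Longrightarrow> Xdiv r a ((i + (r - a)) mod r)
                          = Xdiv r a i + (Zdiv r a ((i + 1) mod r) - Zdiv r a i)"
    unfolding P_iff h_def s_def by auto
qed

lemma Xdiv_E1_coeff:
  assumes "coprime r a" "0 < a" "a < r" "i < r"
  shows "Xdiv r a i None = 1"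
proof -
  have "coprime (r - a) r" using assms coprime_diff_left_iff_nat[of a r] by (simp add: coprime_commute)
  then have "Xdiv r a i None = Xdiv r a 0 None"
    by (rule shift_invariant_imp_const)
      (use assms Xdiv_spec(2)[OF assms(1-3)] in \<open>auto simp: Zdiv_def sum_Ddiv_None\<close>)
  then show ?thesis using Xdiv_spec(1)[OF assms(1-3)] by (simp add: E1_def primD_def)
qed

lemma monomial_val_fixed_point_ne_0_iff:
  "monomial_val j D fixed_point \<noteq> 0 \<longleftrightarrow> D (Some j) \<le> 0 \<and> D (Some (j + 1)) \<le> 0 \<and> D None \<le> 0"
proof -
  have "{..<3::nat} = {0, 1, 2}" by auto
  then show ?thesis
    by (simp add: monomial_val_def fixed_point_def sigma_ray_def power_0_left)
qed

lemma Fj_ArrX: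
  assumes "coprime r a" "0 < a" "a < r" "i < r"
  shows "Fj r a j (ArrX i) = 0"
  using Xdiv_E1_coeff[OF assms] monomial_val_fixed_point_ne_0_iff[of j "Xdiv r a i"]
  by (simp add: Fj_def Frep_def)

lemma Fj_ArrY_ne_0_iff: "Fj r a j (ArrY m) \<noteq> 0 \<longleftrightarrow> tau r a ((m + a) mod r) < j"
  by (simp add: Fj_def Frep_def monomial_val_fixed_point_ne_0_iff Ydiv_def
      sum_Ddiv_Some sum_Ddiv_None)

lemma Fj_ArrZ_ne_0_iff: "j < r \<Longrightarrow> Fj r a j (ArrZ i) \<noteq> 0 \<longleftrightarrow> j < tau r a (i mod r)"
  by (auto simp: Fj_def Frep_def monomial_val_fixed_point_ne_0_iff Zdiv_def
      sum_Ddiv_Some sum_Ddiv_None)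

section \<open>Subrepresentations of F_j along the chain\<close>

locale fixed_point_rep =
  fixes r a j :: nat
  assumes r_gt_1: "1 < r" and a_pos: "0 < a" and a_less: "a < r" and coprime: "coprime r a"
    and j_less: "j < r"
begin

lemma xi_less: "xi r a j < r" and tau_xi: "tau r a (xi r a j) = j"
  and tau_eq_j_imp: "i < r \<Longrightarrow> tau r a i = j \<Longrightarrow> i = xi r a j"
proof -
  have tau: "bij_betw (tau r a) {..<r} {..<r}" using tau_bij a_less coprime by simp
  then have "j \<in> tau r a ` {..<r}" using j_less by (simp add: bij_betw_def)
  then obtain i0 where "i0 < r" "tau r a i0 = j" by auto
  then have ex1: "\<exists>!i. i < r \<and> tau r a i = j"
    using tau by (auto simp: bij_betw_def inj_on_def)
  then have "xi r a j < r \<and> tau r a (xi r a j) = j"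
    unfolding xi_def by (rule theI')
  with ex1
  show "xi r a j < r" "tau r a (xi r a j) = j" "i < r \<Longrightarrow> tau r a i = j \<Longrightarrow> i = xi r a j"
    by auto
qed

definition chain :: "nat \<Rightarrow> nat" where
  "chain q = (xi r a j + Suc q * (r - a)) mod r"

lemma coprime_r_minus_a: "coprime (r - a) r"
  using coprime_diff_left_iff_nat[of a r] a_less coprime by (simp add: coprime_commute)

lemma chain_eq: "chain = (\<lambda>q. (xi r a j + (r - a) + q * (r - a)) mod r)"
  by (simp add: chain_def fun_eq_iff add.assoc)

lemma chain_less: "chain q < r"
  using r_gt_1 by (simp add: chain_def)

lemma chain_inj: "q < r \<Longrightarrow> q' < r \<Longrightarrow> chain q = chain q' \<Longrightarrow> q = q'"
  unfolding chain_eq by (rule progression_mod_inj[OF coprime_r_minus_a])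

lemma chain_bij: "bij_betw chain {..<r} {..<r}"
  unfolding chain_eq using progression_mod_bij[OF coprime_r_minus_a] r_gt_1 by simp

lemma chain_surj: "i < r \<Longrightarrow> \<exists>q<r. i = chain q"
  using chain_bij by (auto simp: bij_betw_def)

lemma chain_shift: "(chain p + n * (r - a)) mod r = chain (p + n)"
proof -
  have "Suc (p + n) * (r - a) = Suc p * (r - a) + n * (r - a)" by (simp add: add_mult_distrib)
  then show ?thesis by (simp add: chain_def mod_add_left_eq add.assoc)
qed

lemma chain_Suc: "(chain q + (r - a)) mod r = chain (Suc q)"
  using chain_shift[of q 1] by simp

lemma chain_last: "chain (r - 1) = xi r a j"
  using r_gt_1 xi_less by (simp add: chain_def)

lemma chain_add_a: "(chain (Suc q) + a) mod r = chain q"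
proof -
  define s where "s = r - a"
  have step: "Suc (Suc q) * s + a = Suc q * s + r"
    using a_less by (simp add: s_def algebra_simps)
  have "(chain (Suc q) + a) mod r = (xi r a j + (Suc (Suc q) * s + a)) mod r"
    by (simp only: chain_def s_def[symmetric] mod_add_left_eq add.assoc)
  also have "\<dots> = (xi r a j + Suc q * s + r) mod r"
    by (simp only: step add.assoc)
  also have "\<dots> = chain q"
    by (simp add: chain_def s_def)
  finally show ?thesis .
qed

lemma chain_0_add_a: "(chain 0 + a) mod r = xi r a j"
proof -
  have "chain r = chain 0" using chain_shift[of 0 r] chain_less[of 0] by simp
  then show ?thesis
    using chain_add_a[of "r - 1"] chain_last r_gt_1 by simp
qed

lemma tau_chain_ne: "Suc q < r \<Longrightarrow> tau r a (chain q) \<noteq> j"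
  using tau_eq_j_imp[OF chain_less] chain_last chain_inj[of q "r - 1"] by fastforce

lemma Fj_nonzero_arrow_cases:
  assumes "\<alpha> \<in> arrows r" "Fj r a j \<alpha> \<noteq> 0"
  obtains q where "Suc q < r" "j < tau r a (chain q)" "\<alpha> = ArrZ (chain q)"
    | q where "Suc q < r" "tau r a (chain q) < j" "\<alpha> = ArrY (chain (Suc q))"
proof -
  obtain i where "i < r" "\<alpha> = ArrX i \<or> \<alpha> = ArrY i \<or> \<alpha> = ArrZ i"
    using assms(1) by (auto simp: arrows_def)
  moreover obtain k where k: "k < r" "i = chain k" using chain_surj \<open>i < r\<close> by blast
  moreover have "\<alpha> \<noteq> ArrX i" using assms(2) Fj_ArrX[OF coprime a_pos a_less \<open>i < r\<close>] by auto
  ultimately consider "\<alpha> = ArrY (chain k)" | "\<alpha> = ArrZ (chain k)" by blast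
  then show ?thesis
  proof cases
    case 1
    then obtain q where "k = Suc q"
      using assms(2) chain_0_add_a tau_xi by (cases k) (auto simp: Fj_ArrY_ne_0_iff)
    then show ?thesis using that(2) 1 assms(2) k chain_add_a by (simp add: Fj_ArrY_ne_0_iff)
  next
    case 2
    have "k \<noteq> r - 1"
      using 2 assms(2) chain_last tau_xi xi_less by (auto simp: Fj_ArrZ_ne_0_iff j_less)
    then show ?thesis using that(1)[of k] 2 assms(2) k chain_less by (simp add: Fj_ArrZ_ne_0_iff j_less)
  qed
qed

lemma is_subrep_Fj_iff:
  "is_subrep r a (Fj r a j) S \<longleftrightarrow> S \<subseteq> {0..<r} \<and>
     (\<forall>q. Suc q < r \<longrightarrow> j < tau r a (chain q) \<longrightarrow> chain q \<in> S \<longrightarrow> chain (Suc q) \<in> S) \<and>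
     (\<forall>q. Suc q < r \<longrightarrow> tau r a (chain q) < j \<longrightarrow> chain (Suc q) \<in> S \<longrightarrow> chain q \<in> S)"
  (is "_ \<longleftrightarrow> _ \<and> ?forward \<and> ?backward")
proof
  assume S: "is_subrep r a (Fj r a j) S"
  have closed: "arr_head r a \<alpha> \<in> S"
    if "\<alpha> \<in> arrows r" "arr_tail r a \<alpha> \<in> S" "Fj r a j \<alpha> \<noteq> 0" for \<alpha>
    using S that by (simp add: is_subrep_def)
  have ?forward
    using closed[of "ArrZ (chain _)"] chain_less chain_Suc a_less
    by (simp add: arrows_def arr_head_def arr_tail_def Fj_ArrZ_ne_0_iff j_less)
  moreover have ?backward
    using closed[of "ArrY (chain (Suc _))"] chain_less chain_add_a
    by (simp add: arrows_def arr_head_def arr_tail_def Fj_ArrY_ne_0_iff)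
  ultimately show "S \<subseteq> {0..<r} \<and> ?forward \<and> ?backward"
    using S by (simp add: is_subrep_def)
next
  assume S: "S \<subseteq> {0..<r} \<and> ?forward \<and> ?backward"
  have "arr_head r a \<alpha> \<in> S"
    if "\<alpha> \<in> arrows r" "arr_tail r a \<alpha> \<in> S" "Fj r a j \<alpha> \<noteq> 0" for \<alpha>
    using that(1,3)
  proof (cases rule: Fj_nonzero_arrow_cases)
    case (1 q)
    then show ?thesis using S that(2) chain_Suc a_less by (simp add: arr_head_def arr_tail_def)
  next
    case (2 q)
    then show ?thesis using S that(2) chain_add_a by (simp add: arr_head_def arr_tail_def)
  qed
  then show "is_subrep r a (Fj r a j) S" using S by (simp add: is_subrep_def)
qed

lemma Vset_chain:
  assumes "p < r"
  shows "Vset r a (chain p) j = chain ` {p..<r}"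
proof -
  have least: "(LEAST n. (chain p + n * (r - a)) mod r = xi r a j) = r - 1 - p"
  proof (rule Least_equality)
    show "(chain p + (r - 1 - p) * (r - a)) mod r = xi r a j"
      using chain_shift[of p "r - 1 - p"] chain_last assms by simp
  next
    fix n assume "(chain p + n * (r - a)) mod r = xi r a j"
    then have "chain (p + n) = chain (r - 1)" using chain_shift chain_last by simp
    then show "r - 1 - p \<le> n" using chain_inj[of "p + n" "r - 1"] r_gt_1 by fastforce
  qed
  have "Vset r a (chain p) j = (\<lambda>k. (chain p + k * (r - a)) mod r) ` {..r - 1 - p}"
    unfolding Vset_def Let_def least by auto
  also have "\<dots> = (\<lambda>k. chain (p + k)) ` {0..r - 1 - p}"
    by (simp add: chain_shift atMost_atLeast0)
  also have "\<dots> = chain ` ((+) p ` {0..r - 1 - p})"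
    by (simp only: image_image)
  also have "(+) p ` {0..r - 1 - p} = {p..<r}"
    using assms by auto
  finally show ?thesis .
qed

lemma Wset_chain:
  assumes "p < r"
  shows "Wset r a (chain p) j = chain ` {..p}"
proof -
  have xi_shift: "(xi r a j + m * (r - a)) mod r = chain (m - 1)" if "1 \<le> m" for m
    using that by (simp add: chain_def)
  have least: "(LEAST m. 1 \<le> m \<and> (xi r a j + m * (r - a)) mod r = chain p) = Suc p"
  proof (rule Least_equality)
    fix m assume "1 \<le> m \<and> (xi r a j + m * (r - a)) mod r = chain p"
    then show "Suc p \<le> m" using xi_shift chain_inj[of "m - 1" p] assms by fastforce
  qed (use xi_shift[of "Suc p"] in simp)
  have "Wset r a (chain p) j = (\<lambda>m. (xi r a j + m * (r - a)) mod r) ` {m. 1 \<le> m \<and> m \<le> Suc p}"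
    unfolding Wset_def Let_def least by auto
  also have "{m. 1 \<le> m \<and> m \<le> Suc p} = Suc ` {..p}"
    by (auto simp: image_Suc_atMost)
  finally show ?thesis
    by (simp add: image_image chain_eq add.assoc)
qed

lemma chain_mem_interval_iff:
  assumes "q < r" "u \<le> r"
  shows "chain q \<in> chain ` {l..<u} \<longleftrightarrow> l \<le> q \<and> q < u"
proof
  assume "chain q \<in> chain ` {l..<u}"
  then obtain q' where "q' \<in> {l..<u}" "chain q = chain q'" by auto
  then show "l \<le> q \<and> q < u" using chain_inj[of q q'] assms by auto
qed auto

lemma is_subrep_chain_interval:
  assumes "u \<le> r"
    and enter: "0 < l \<Longrightarrow> j < tau r a (chain (l - 1))"
    and leave: "u < r \<Longrightarrow> tau r a (chain (u - 1)) < j"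
  shows "is_subrep r a (Fj r a j) (chain ` {l..<u})"
  unfolding is_subrep_Fj_iff
proof (intro conjI allI impI)
  show "chain ` {l..<u} \<subseteq> {0..<r}" using chain_less by auto
next
  fix q assume q: "Suc q < r" "j < tau r a (chain q)" "chain q \<in> chain ` {l..<u}"
  then have "l \<le> q" "q < u" using chain_mem_interval_iff assms(1) by auto
  moreover have "Suc q \<noteq> u" using leave q by auto
  ultimately show "chain (Suc q) \<in> chain ` {l..<u}" by auto
next
  fix q assume q: "Suc q < r" "tau r a (chain q) < j" "chain (Suc q) \<in> chain ` {l..<u}"
  then have "l \<le> Suc q" "Suc q < u" using chain_mem_interval_iff assms(1) by auto
  moreover have "l \<noteq> Suc q"
  proof
    assume "l = Suc q"
    then have "j < tau r a (chain q)" using enter by simp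
    with q(2) show False by simp
  qed
  ultimately show "chain q \<in> chain ` {l..<u}" by auto
qed

lemma theta_of_chain_image:
  assumes "A \<subseteq> {..<r}"
  shows "theta_of \<theta> (chain ` A) = (\<Sum>k\<in>A. \<theta> (chain k))"
proof -
  have "inj_on chain A" using chain_inj assms by (auto simp: inj_on_def)
  then show ?thesis by (simp add: theta_of_def sum.reindex)
qed

lemma theta_sum_along_chain: "\<theta> \<in> Theta r \<Longrightarrow> (\<Sum>k<r. \<theta> (chain k)) = 0"
  using sum.reindex_bij_betw[OF chain_bij, of \<theta>] by (simp add: Theta_def)

definition proper_subrep :: "nat set \<Rightarrow> bool" where
  "proper_subrep S \<longleftrightarrow> S \<noteq> {} \<and> S \<subset> {0..<r} \<and> is_subrep r a (Fj r a j) S"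

definition boundary :: "nat set \<Rightarrow> nat set" where
  "boundary S = {q. Suc q < r \<and> (chain q \<in> S) \<noteq> (chain (Suc q) \<in> S)}"

definition boundary_term :: "(nat \<Rightarrow> rat) \<Rightarrow> nat set \<Rightarrow> nat \<Rightarrow> rat" where
  "boundary_term \<theta> S q = (if chain q \<in> S then 1 else - 1) * (\<Sum>k\<le>q. \<theta> (chain k))"

lemma finite_boundary: "finite (boundary S)"
  unfolding boundary_def by (rule finite_subset[of _ "{..<r}"]) auto

lemma theta_of_eq_sum_boundary_term:
  assumes \<theta>: "\<theta> \<in> Theta r" and S: "S \<subseteq> {0..<r}"
  shows "theta_of \<theta> S = (\<Sum>q\<in>boundary S. boundary_term \<theta> S q)"
proof -
  define e where "e q = (if chain q \<in> S then 1 else 0 :: rat)" for q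
  define P where "P q = (\<Sum>k\<le>q. \<theta> (chain k))" for q
  define n where "n = r - 1"
  have r: "r = Suc n" using r_gt_1 by (simp add: n_def)
  have "S = chain ` {q \<in> {..<r}. chain q \<in> S}"
  proof (intro equalityI subsetI)
    fix x assume "x \<in> S"
    then obtain q where "q < r" "x = chain q" using S chain_surj by force
    then show "x \<in> chain ` {q \<in> {..<r}. chain q \<in> S}" using \<open>x \<in> S\<close> by auto
  qed auto
  then have "theta_of \<theta> S = theta_of \<theta> (chain ` {q \<in> {..<r}. chain q \<in> S})"
    by (rule arg_cong)
  also have "\<dots> = (\<Sum>q\<in>{q \<in> {..<r}. chain q \<in> S}. \<theta> (chain q))"
    by (rule theta_of_chain_image) auto
  also have "\<dots> = (\<Sum>q\<le>n. \<theta> (chain q) * e q)"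
    by (subst sum.inter_filter) (auto simp: e_def r lessThan_Suc_atMost intro!: sum.cong)
  also have "\<dots> = (\<Sum>q<n. P q * (e q - e (Suc q))) + P n * e n"
    unfolding P_def by (rule sum_by_parts)
  also have "P n = 0"
    using theta_sum_along_chain[OF \<theta>] by (simp add: P_def r lessThan_Suc_atMost)
  also have "(\<Sum>q<n. P q * (e q - e (Suc q))) = (\<Sum>q\<in>boundary S. boundary_term \<theta> S q)"
  proof (rule sum.mono_neutral_cong_right)
    show "boundary S \<subseteq> {..<n}" unfolding boundary_def n_def by auto
    show "\<forall>q\<in>{..<n} - boundary S. P q * (e q - e (Suc q)) = 0"
      unfolding boundary_def e_def n_def by auto
    show "P q * (e q - e (Suc q)) = boundary_term \<theta> S q" if "q \<in> boundary S" for q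
      using that by (auto simp: boundary_def boundary_term_def e_def P_def)
  qed simp
  finally show ?thesis by simp
qed

lemma boundary_nonempty:
  assumes "S \<subseteq> {0..<r}" "S \<noteq> {}" "S \<noteq> {0..<r}"
  shows "boundary S \<noteq> {}"
proof -
  obtain v where "v \<in> S" using assms(2) by auto
  with assms(1) obtain q0 where "q0 < r" "chain q0 \<in> S" using chain_surj by force
  have "\<not> {0..<r} \<subseteq> S" using assms(1,3) by blast
  then obtain w where "w < r" "w \<notin> S" by (auto simp: subset_iff)
  then obtain q1 where "q1 < r" "chain q1 \<notin> S" using chain_surj by force
  obtain q where "Suc q < r" "(chain q \<in> S) \<noteq> (chain (Suc q) \<in> S)"
    using ex_adjacent_change[of q0 r q1 "\<lambda>q. chain q \<in> S"] \<open>q0 < r\<close> \<open>q1 < r\<close>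
      \<open>chain q0 \<in> S\<close> \<open>chain q1 \<notin> S\<close> by auto
  then show ?thesis unfolding boundary_def by auto
qed

lemma exit_boundary_Wset:
  assumes S: "is_subrep r a (Fj r a j) S" and q: "Suc q < r"
    and "chain q \<in> S" "chain (Suc q) \<notin> S"
  shows "proper_subrep (Wset r a (chain q) j)"
    and "theta_of \<theta> (Wset r a (chain q) j) = (\<Sum>k\<le>q. \<theta> (chain k))"
proof -
  have W: "Wset r a (chain q) j = chain ` {..q}" using Wset_chain q by simp
  have "tau r a (chain q) < j"
    using S assms(3,4) q tau_chain_ne[OF q] by (auto simp: is_subrep_Fj_iff not_less_iff_gr_or_eq)
  moreover have "{..q} = {0..<Suc q}" by auto
  ultimately have "is_subrep r a (Fj r a j) (chain ` {..q})"
    using is_subrep_chain_interval[of "Suc q" 0] q by simp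
  moreover have "chain (r - 1) \<notin> chain ` {0..<Suc q}"
    using chain_mem_interval_iff[of "r - 1" "Suc q" 0] q by simp
  ultimately show "proper_subrep (Wset r a (chain q) j)"
    using chain_less unfolding W proper_subrep_def \<open>{..q} = {0..<Suc q}\<close> by auto
  show "theta_of \<theta> (Wset r a (chain q) j) = (\<Sum>k\<le>q. \<theta> (chain k))"
    unfolding W by (rule theta_of_chain_image) (use q in auto)
qed

lemma entry_boundary_Vset:
  assumes \<theta>: "\<theta> \<in> Theta r" and S: "is_subrep r a (Fj r a j) S" and q: "Suc q < r"
    and "chain q \<notin> S" "chain (Suc q) \<in> S"
  shows "proper_subrep (Vset r a (chain (Suc q)) j)"
    and "theta_of \<theta> (Vset r a (chain (Suc q)) j) = - (\<Sum>k\<le>q. \<theta> (chain k))"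
proof -
  have V: "Vset r a (chain (Suc q)) j = chain ` {Suc q..<r}" using Vset_chain q by simp
  have "j < tau r a (chain q)"
    using S assms(4,5) q tau_chain_ne[OF q] by (auto simp: is_subrep_Fj_iff not_less_iff_gr_or_eq)
  then have "is_subrep r a (Fj r a j) (chain ` {Suc q..<r})"
    using is_subrep_chain_interval[of r "Suc q"] by simp
  moreover have "chain 0 \<notin> chain ` {Suc q..<r}"
    using chain_mem_interval_iff[of 0 r "Suc q"] r_gt_1 by simp
  ultimately show "proper_subrep (Vset r a (chain (Suc q)) j)"
    using chain_less q unfolding V proper_subrep_def by auto
  have "(\<Sum>k<r. \<theta> (chain k)) = (\<Sum>k<Suc q. \<theta> (chain k)) + (\<Sum>k\<in>{Suc q..<r}. \<theta> (chain k))"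
    using sum.atLeastLessThan_concat[of 0 "Suc q" r "\<lambda>k. \<theta> (chain k)"] q
    by (simp add: atLeast0LessThan)
  moreover have "theta_of \<theta> (chain ` {Suc q..<r}) = (\<Sum>k\<in>{Suc q..<r}. \<theta> (chain k))"
    by (rule theta_of_chain_image) auto
  ultimately show "theta_of \<theta> (Vset r a (chain (Suc q)) j) = - (\<Sum>k\<le>q. \<theta> (chain k))"
    unfolding V using theta_sum_along_chain[OF \<theta>] by (simp add: lessThan_Suc_atMost)
qed

lemma boundary_term_is_test_value:
  assumes "\<theta> \<in> Theta r" "is_subrep r a (Fj r a j) S" "q \<in> boundary S"
  shows "\<exists>i<r. proper_subrep (Vset r a i j) \<and> boundary_term \<theta> S q = theta_of \<theta> (Vset r a i j) \<or>
               proper_subrep (Wset r a i j) \<and> boundary_term \<theta> S q = theta_of \<theta> (Wset r a i j)"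
proof (cases "chain q \<in> S")
  case True
  with assms(3) have "Suc q < r" "chain (Suc q) \<notin> S" by (auto simp: boundary_def)
  with True have "proper_subrep (Wset r a (chain q) j)"
    and "boundary_term \<theta> S q = theta_of \<theta> (Wset r a (chain q) j)"
    using exit_boundary_Wset[OF assms(2)] by (simp_all add: boundary_term_def)
  then show ?thesis using chain_less by blast
next
  case False
  with assms(3) have "Suc q < r" "chain (Suc q) \<in> S" by (auto simp: boundary_def)
  with False have "proper_subrep (Vset r a (chain (Suc q)) j)"
    and "boundary_term \<theta> S q = theta_of \<theta> (Vset r a (chain (Suc q)) j)"
    using entry_boundary_Vset[OF assms(1,2)] by (simp_all add: boundary_term_def)
  then show ?thesis using chain_less by blast
qed

lemma stable_Fj_iff:
  assumes \<theta>: "\<theta> \<in> Theta r"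
  shows "stable r a \<theta> (Fj r a j) \<longleftrightarrow>
    (\<forall>i<r. proper_subrep (Vset r a i j) \<longrightarrow> theta_of \<theta> (Vset r a i j) > 0) \<and>
    (\<forall>i<r. proper_subrep (Wset r a i j) \<longrightarrow> theta_of \<theta> (Wset r a i j) > 0)"
proof
  assume "stable r a \<theta> (Fj r a j)"
  then show "(\<forall>i<r. proper_subrep (Vset r a i j) \<longrightarrow> theta_of \<theta> (Vset r a i j) > 0) \<and>
             (\<forall>i<r. proper_subrep (Wset r a i j) \<longrightarrow> theta_of \<theta> (Wset r a i j) > 0)"
    by (auto simp: stable_def proper_subrep_def)
next
  assume tests: "(\<forall>i<r. proper_subrep (Vset r a i j) \<longrightarrow> theta_of \<theta> (Vset r a i j) > 0) \<and>
                 (\<forall>i<r. proper_subrep (Wset r a i j) \<longrightarrow> theta_of \<theta> (Wset r a i j) > 0)"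
  show "stable r a \<theta> (Fj r a j)"
    unfolding stable_def
  proof (intro allI impI, elim conjE)
    fix S assume S: "is_subrep r a (Fj r a j) S" "S \<noteq> {}" "S \<noteq> {0..<r}"
    then have sub: "S \<subseteq> {0..<r}" by (simp add: is_subrep_def)
    have pos: "0 < boundary_term \<theta> S q" if q: "q \<in> boundary S" for q
    proof -
      obtain i where "i < r" and
        "proper_subrep (Vset r a i j) \<and> boundary_term \<theta> S q = theta_of \<theta> (Vset r a i j) \<or>
         proper_subrep (Wset r a i j) \<and> boundary_term \<theta> S q = theta_of \<theta> (Wset r a i j)"
        using boundary_term_is_test_value[OF \<theta> S(1) q] by blast
      then show ?thesis using tests by (elim disjE) auto
    qed
    have "0 < (\<Sum>q\<in>boundary S. boundary_term \<theta> S q)"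
      using finite_boundary boundary_nonempty[OF sub S(2,3)] pos by (rule sum_pos)
    then show "theta_of \<theta> S > 0"
      by (simp only: theta_of_eq_sum_boundary_term[OF \<theta> sub])
  qed
qed

lemma semistable_Fj_iff:
  assumes \<theta>: "\<theta> \<in> Theta r"
  shows "semistable r a \<theta> (Fj r a j) \<longleftrightarrow>
    (\<forall>i<r. proper_subrep (Vset r a i j) \<longrightarrow> theta_of \<theta> (Vset r a i j) \<ge> 0) \<and>
    (\<forall>i<r. proper_subrep (Wset r a i j) \<longrightarrow> theta_of \<theta> (Wset r a i j) \<ge> 0)"
proof
  assume "semistable r a \<theta> (Fj r a j)"
  then show "(\<forall>i<r. proper_subrep (Vset r a i j) \<longrightarrow> theta_of \<theta> (Vset r a i j) \<ge> 0) \<and>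
             (\<forall>i<r. proper_subrep (Wset r a i j) \<longrightarrow> theta_of \<theta> (Wset r a i j) \<ge> 0)"
    by (auto simp: semistable_def proper_subrep_def)
next
  assume tests: "(\<forall>i<r. proper_subrep (Vset r a i j) \<longrightarrow> theta_of \<theta> (Vset r a i j) \<ge> 0) \<and>
                 (\<forall>i<r. proper_subrep (Wset r a i j) \<longrightarrow> theta_of \<theta> (Wset r a i j) \<ge> 0)"
  show "semistable r a \<theta> (Fj r a j)"
    unfolding semistable_def
  proof (intro allI impI, elim conjE)
    fix S assume S: "is_subrep r a (Fj r a j) S" "S \<noteq> {}" "S \<noteq> {0..<r}"
    then have sub: "S \<subseteq> {0..<r}" by (simp add: is_subrep_def)
    have nonneg: "0 \<le> boundary_term \<theta> S q" if q: "q \<in> boundary S" for q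
    proof -
      obtain i where "i < r" and
        "proper_subrep (Vset r a i j) \<and> boundary_term \<theta> S q = theta_of \<theta> (Vset r a i j) \<or>
         proper_subrep (Wset r a i j) \<and> boundary_term \<theta> S q = theta_of \<theta> (Wset r a i j)"
        using boundary_term_is_test_value[OF \<theta> S(1) q] by blast
      then show ?thesis using tests by (elim disjE) auto
    qed
    then have "0 \<le> (\<Sum>q\<in>boundary S. boundary_term \<theta> S q)"
      by (rule sum_nonneg)
    then show "theta_of \<theta> S \<ge> 0"
      by (simp only: theta_of_eq_sum_boundary_term[OF \<theta> sub])
  qed
qed

end

theorem mainTheorem15:
  fixes r a j :: nat and \<theta> :: "nat \<Rightarrow> rat"
  assumes "1 < r" and "0 < a" and "a < r" and "coprime r a"
    and "\<theta> \<in> Theta r" and "j < r"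
  shows "(stable r a \<theta> (Fj r a j) \<longleftrightarrow>
            (\<forall>i<r. Vset r a i j \<noteq> {} \<and> Vset r a i j \<subset> {0..<r} \<and>
                    is_subrep r a (Fj r a j) (Vset r a i j)
                    \<longrightarrow> theta_of \<theta> (Vset r a i j) > 0) \<and>
            (\<forall>i<r. Wset r a i j \<noteq> {} \<and> Wset r a i j \<subset> {0..<r} \<and>
                    is_subrep r a (Fj r a j) (Wset r a i j)
                    \<longrightarrow> theta_of \<theta> (Wset r a i j) > 0))
       \<and> (semistable r a \<theta> (Fj r a j) \<longleftrightarrow>
            (\<forall>i<r. Vset r a i j \<noteq> {} \<and> Vset r a i j \<subset> {0..<r} \<and>
                    is_subrep r a (Fj r a j) (Vset r a i j)
                    \<longrightarrow> theta_of \<theta> (Vset r a i j) \<ge> 0) \<and>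
            (\<forall>i<r. Wset r a i j \<noteq> {} \<and> Wset r a i j \<subset> {0..<r} \<and>
                    is_subrep r a (Fj r a j) (Wset r a i j)
                    \<longrightarrow> theta_of \<theta> (Wset r a i j) \<ge> 0))"
proof -
  interpret fixed_point_rep r a j
    using assms by unfold_locales
  show ?thesis
    by (simp only: stable_Fj_iff[OF assms(5)] semistable_Fj_iff[OF assms(5)] proper_subrep_def)
qed

end
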